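(* Let $\Phi$ be a finite crystallographic root system and let $\beta,\gamma\in\Phi^+$ be distinct positive roots. Then \[ \operatorname{Cov}(\mathcal{X}_\beta,\mathcal{X}_\gamma)=\pm\Big(\frac14-\frac{1}{2\cdot\operatorname{ord}(\beta,\gamma)}\Big), \] with the sign positive if $\langle\beta,\gamma\rangle\ge0$ and negative if $\langle\beta,\gamma\rangle\le 0$. In particular, $\mathcal{X}_\beta$ and $\mathcal{X}_\gamma$ are independent if and only if $\beta$ and $\gamma$ are orthogonal.
   Context: $\Phi\subset V$ is a finite crystallographic root system in a Euclidean space with inner product $\langle\cdot,\cdot\rangle$, with positive roots $\Phi^+$ and Weyl group $W$; $s_\beta$ is the reflection in $\beta$. $\operatorname{ord}(\beta,\gamma)=\min\{k>0 : (s_\beta s_\gamma)^k=e\}$. For $\beta\in\Phi^+$, $\mathcal{X}_\beta$ is the Bernoulli random variable on $W$ with the uniform distribution, $\mathcal{X}_\beta(w)=1$ if $w(\beta)\in-\Phi^+$ and $0$ if $w(\beta)\in\Phi^+$. *)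

theory Defs
  imports "HOL-Probability.Probability"
begin

definition refl :: "'a::euclidean_space \<Rightarrow> 'a \<Rightarrow> 'a" where
  "refl b x = x - ((2 * (x \<bullet> b)) / (b \<bullet> b)) *\<^sub>R b"

definition root_system :: "'a::euclidean_space set \<Rightarrow> bool" where
  "root_system R \<longleftrightarrow>
     finite R \<and> 0 \<notin> R \<and>
     (\<forall>a\<in>R. refl a ` R = R) \<and>
     (\<forall>a\<in>R. \<forall>b\<in>R. (2 * (a \<bullet> b)) / (b \<bullet> b) \<in> \<int>) \<and>
     (\<forall>a\<in>R. \<forall>c::real. c *\<^sub>R a \<in> R \<longrightarrow> c = 1 \<or> c = -1)"

definition positive_system :: "'a::euclidean_space set \<Rightarrow> 'a set \<Rightarrow> bool" where
  "positive_system R P \<longleftrightarrow>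
     (\<exists>v. (\<forall>a\<in>R. a \<bullet> v \<noteq> 0) \<and> P = {a\<in>R. a \<bullet> v > 0})"

inductive_set weyl_group :: "'a::euclidean_space set \<Rightarrow> ('a \<Rightarrow> 'a) set"
  for R :: "'a set" where
  weyl_id: "id \<in> weyl_group R"
| weyl_step: "w \<in> weyl_group R \<Longrightarrow> a \<in> R \<Longrightarrow> refl a \<circ> w \<in> weyl_group R"

definition ord_refl :: "'a::euclidean_space \<Rightarrow> 'a \<Rightarrow> nat" where
  "ord_refl b c = (LEAST k::nat. k > 0 \<and> (refl b \<circ> refl c) ^^ k = id)"

definition unif_W :: "'a::euclidean_space set \<Rightarrow> ('a \<Rightarrow> 'a) measure" where
  "unif_W R = measure_pmf (pmf_of_set (weyl_group R))"

definition X_rv :: "'a::euclidean_space set \<Rightarrow> 'a \<Rightarrow> ('a \<Rightarrow> 'a) \<Rightarrow> real" where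
  "X_rv P b w = (if w b \<in> uminus ` P then 1 else 0)"

definition covariance :: "'w measure \<Rightarrow> ('w \<Rightarrow> real) \<Rightarrow> ('w \<Rightarrow> real) \<Rightarrow> real" where
  "covariance M X Y =
     (\<integral>w. (X w - (\<integral>v. X v \<partial>M)) * (Y w - (\<integral>v. Y v \<partial>M)) \<partial>M)"

end

theory Submission
  imports Defs
begin

text \<open>
  The reflections s_b and s_c generate a dihedral subgroup D of W of order 2m, m = ord(b, c),
  consisting of the elements (s_b s_c)^k and (s_b s_c)^k s_b for k < m. On a left coset w D the
  values of X_b and X_c are governed by the signs of the roots d b, d c (d in D) against the regular
  vector w^-1 v. In coordinates with respect to b and c, the reflections s_b and s_c act through
  the Cartan integers A = 2<c,b>/<b,b> and B = 2<b,c>/<c,c>; as b and c are not proportional,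
  A B < 4, which leaves eleven possible pairs (A, B). For each of them a direct computation shows that
  the number K of d in D sending both b and c to negative roots is m - 1 if <b,c> >= 0 and 1 if
  <b,c> <= 0, whatever the regular vector. Summing over the cosets gives E[X_b X_c] = K / (2m);
  right multiplication by s_b exchanges the events X_b = 0 and X_b = 1, so E[X_b] = 1/2, and the
  covariance is K / (2m) - 1/4. Finally, two Bernoulli variables are independent exactly when their
  covariance vanishes, i.e. when m = 2, i.e. when b and c are orthogonal.
\<close>

section \<open>Reflections and the Weyl group\<close>

definition cartan :: "'a::euclidean_space \<Rightarrow> 'a \<Rightarrow> real" where
  "cartan x y = 2 * (x \<bullet> y) / (y \<bullet> y)"

lemma refl_eq_cartan: "refl b x = x - cartan x b *\<^sub>R b"
  by (simp add: refl_def cartan_def)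

lemma linear_refl: "linear (refl b)"
  by (rule linearI) (auto simp: refl_def inner_add_left algebra_simps add_divide_distrib)

lemma refl_inner_refl: "b \<noteq> 0 \<Longrightarrow> refl b x \<bullet> refl b y = x \<bullet> y"
  by (simp add: refl_def inner_diff_left inner_diff_right inner_commute field_simps)

lemma refl_comp_refl: "b \<noteq> 0 \<Longrightarrow> refl b \<circ> refl b = id"
  by (simp add: fun_eq_iff refl_def inner_diff_left algebra_simps field_simps scaleR_left_distrib[symmetric])

lemma bij_refl: "b \<noteq> 0 \<Longrightarrow> bij (refl b)"
  using o_bij refl_comp_refl by metis

lemma inv_refl: "b \<noteq> 0 \<Longrightarrow> inv (refl b) = refl b"
  using inv_unique_comp refl_comp_refl by metis

lemma refl_self: "b \<noteq> 0 \<Longrightarrow> refl b b = - b"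
  by (simp add: refl_def scaleR_2)

context
  fixes R :: "'a::euclidean_space set"
  assumes R: "root_system R"
begin

lemma root_nonzero: "a \<in> R \<Longrightarrow> a \<noteq> 0"
  using R unfolding root_system_def by auto

lemma refl_root: "a \<in> R \<Longrightarrow> x \<in> R \<Longrightarrow> refl a x \<in> R"
  using R unfolding root_system_def by blast

lemma uminus_root: "a \<in> R \<Longrightarrow> - a \<in> R"
  using refl_root[of a a] refl_self root_nonzero by force

lemma cartan_root_Ints: "a \<in> R \<Longrightarrow> b \<in> R \<Longrightarrow> cartan a b \<in> \<int>"
  using R unfolding root_system_def cartan_def by blast

lemma root_scaleR: "a \<in> R \<Longrightarrow> t *\<^sub>R a \<in> R \<Longrightarrow> t = 1 \<or> t = -1"
  using R unfolding root_system_def by blast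

lemma weyl_group_comp: "w \<in> weyl_group R \<Longrightarrow> u \<in> weyl_group R \<Longrightarrow> w \<circ> u \<in> weyl_group R"
  by (induction w rule: weyl_group.induct) (auto simp: comp_assoc intro: weyl_group.intros)

lemma refl_weyl_group: "a \<in> R \<Longrightarrow> refl a \<in> weyl_group R"
  using weyl_group.weyl_step[OF weyl_group.weyl_id, of a R] by simp

lemma funpow_weyl_group: "w \<in> weyl_group R \<Longrightarrow> w ^^ k \<in> weyl_group R"
  by (induction k) (auto intro: weyl_group_comp weyl_group.weyl_id)

lemma linear_weyl_group: "w \<in> weyl_group R \<Longrightarrow> linear w"
proof (induction w rule: weyl_group.induct)
  case (weyl_step w a)
  show ?case
    using linear_compose[OF weyl_step.IH linear_refl] .
qed (rule linear_id)

lemma weyl_group_inner: "w \<in> weyl_group R \<Longrightarrow> w x \<bullet> w y = x \<bullet> y"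
  by (induction w rule: weyl_group.induct) (auto simp: refl_inner_refl root_nonzero)

lemma weyl_group_root: "w \<in> weyl_group R \<Longrightarrow> a \<in> R \<Longrightarrow> w a \<in> R"
  by (induction w rule: weyl_group.induct) (auto simp: refl_root)

lemma bij_weyl_group: "w \<in> weyl_group R \<Longrightarrow> bij w"
proof (induction w rule: weyl_group.induct)
  case (weyl_step w a)
  show ?case
    using bij_comp[OF weyl_step.IH bij_refl] root_nonzero weyl_step.hyps by blast
qed (rule bij_id)

lemma weyl_group_comp_inv: "w \<in> weyl_group R \<Longrightarrow> w \<circ> inv w = id"
  using bij_weyl_group bij_is_surj surj_iff by metis

lemma weyl_group_inv_comp: "w \<in> weyl_group R \<Longrightarrow> inv w \<circ> w = id"
  using bij_weyl_group bij_is_inj inj_iff by metis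

lemma inv_weyl_group: "w \<in> weyl_group R \<Longrightarrow> inv w \<in> weyl_group R"
proof (induction w rule: weyl_group.induct)
  case weyl_id
  then show ?case
    using weyl_group.weyl_id by (metis inv_id)
next
  case (weyl_step w a)
  then have "inv (refl a \<circ> w) = inv w \<circ> refl a"
    using o_inv_distrib bij_weyl_group bij_refl inv_refl root_nonzero by metis
  then show ?case
    using weyl_group_comp refl_weyl_group weyl_step by metis
qed

lemma weyl_group_minus_in_span: "w \<in> weyl_group R \<Longrightarrow> w x - x \<in> span R"
proof (induction w rule: weyl_group.induct)
  case (weyl_step w a)
  have "(refl a \<circ> w) x - x = (w x - x) - cartan (w x) a *\<^sub>R a"
    by (simp add: refl_eq_cartan)
  then show ?case
    using weyl_step span_diff span_mul span_base by metis
qed (simp add: span_zero)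

lemma weyl_group_eq_id:
  assumes u: "u \<in> weyl_group R" and fixes_roots: "\<And>a. a \<in> R \<Longrightarrow> u a = a"
  shows "u = id"
proof
  fix x
  have "orthogonal (u x - x) a" if "a \<in> R" for a
    using weyl_group_inner[OF u, of x a] fixes_roots[OF that]
    by (simp add: orthogonal_def inner_diff_left)
  then have "orthogonal (u x - x) (u x - x)"
    using orthogonal_to_span weyl_group_minus_in_span[OF u] by blast
  then show "u x = id x"
    by (simp add: orthogonal_def)
qed

lemma finite_weyl_group: "finite (weyl_group R)"
proof -
  have "inj_on (\<lambda>w. restrict w R) (weyl_group R)"
  proof (rule inj_onI)
    fix w u assume w: "w \<in> weyl_group R" and u: "u \<in> weyl_group R"
      and "restrict w R = restrict u R"
    have "(inv w \<circ> u) a = a" if "a \<in> R" for a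
    proof -
      have "u a = w a"
        using \<open>restrict w R = restrict u R\<close> that by (metis restrict_apply')
      then show ?thesis
        using weyl_group_inv_comp[OF w] by (simp add: fun_eq_iff)
    qed
    then have "inv w \<circ> u = id"
      using weyl_group_eq_id weyl_group_comp inv_weyl_group w u by blast
    then show "w = u"
      using weyl_group_comp_inv[OF w] by (metis comp_assoc comp_id id_comp)
  qed
  moreover have "(\<lambda>w. restrict w R) ` weyl_group R \<subseteq> R \<rightarrow>\<^sub>E R"
    using weyl_group_root by auto
  moreover have "finite (R \<rightarrow>\<^sub>E R)"
    using R by (simp add: root_system_def finite_PiE)
  ultimately show ?thesis
    using finite_imageD finite_subset by metis
qed

lemma sum_weyl_group_comp_right:
  assumes "d \<in> weyl_group R"
  shows "(\<Sum>w\<in>weyl_group R. f (w \<circ> d)) = (\<Sum>w\<in>weyl_group R. f w)"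
proof -
  have "bij_betw (\<lambda>w. w \<circ> d) (weyl_group R) (weyl_group R)"
  proof (rule bij_betw_byWitness[where f' = "\<lambda>w. w \<circ> inv d"])
    show "\<forall>w\<in>weyl_group R. w \<circ> d \<circ> inv d = w" "\<forall>w\<in>weyl_group R. w \<circ> inv d \<circ> d = w"
      using weyl_group_comp_inv[OF assms] weyl_group_inv_comp[OF assms] by (simp_all add: comp_assoc)
    show "(\<lambda>w. w \<circ> d) ` weyl_group R \<subseteq> weyl_group R" "(\<lambda>w. w \<circ> inv d) ` weyl_group R \<subseteq> weyl_group R"
      using weyl_group_comp inv_weyl_group assms by blast+
  qed
  then show ?thesis
    by (rule sum.reindex_bij_betw)
qed

end

section \<open>Bernoulli variables on a finite probability space\<close>

lemma covariance_measure_pmf_finite: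
  fixes X Y :: "'w \<Rightarrow> real"
  assumes "finite (set_pmf p)"
  shows "covariance (measure_pmf p) X Y =
    measure_pmf.expectation p (\<lambda>w. X w * Y w) - measure_pmf.expectation p X * measure_pmf.expectation p Y"
proof -
  have int: "integrable (measure_pmf p) f" for f :: "'w \<Rightarrow> real"
    using integrable_measure_pmf_finite[OF assms] .
  define mX mY where "mX = measure_pmf.expectation p X" and "mY = measure_pmf.expectation p Y"
  have "(\<lambda>w. (X w - mX) * (Y w - mY)) = (\<lambda>w. X w * Y w - (mX * Y w + mY * X w) + mX * mY)"
    by (simp add: fun_eq_iff algebra_simps)
  then show ?thesis
    unfolding covariance_def mX_def[symmetric] mY_def[symmetric]
    by (simp add: int mX_def mY_def prob_space_measure_pmf prob_space.prob_space)
qed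

lemma indep_var_measure_pmfI:
  assumes "\<And>A B. measure (measure_pmf p) (X -` A \<inter> Y -` B) =
    measure (measure_pmf p) (X -` A) * measure (measure_pmf p) (Y -` B)"
  shows "prob_space.indep_var (measure_pmf p) (count_space UNIV) X (count_space UNIV) Y"
proof -
  let ?S = "\<lambda>Z. {Z -` A \<inter> space (measure_pmf p) | A. A \<in> sets (count_space UNIV)}"
  have "prob_space.indep_set (measure_pmf p) (?S X) (?S Y)"
    by (rule prob_space.indep_setI[OF prob_space_measure_pmf]) (auto simp: assms Int_commute)
  moreover have "(\<lambda>i. {case_bool X Y i -` A \<inter> space (measure_pmf p) | A.
      A \<in> sets (case_bool (count_space UNIV) (count_space UNIV) i)}) = case_bool (?S X) (?S Y)"
    by (rule ext) (simp split: bool.split)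
  ultimately show ?thesis
    unfolding prob_space.indep_var_def[OF prob_space_measure_pmf]
      prob_space.indep_vars_def2[OF prob_space_measure_pmf] prob_space.indep_set_def[OF prob_space_measure_pmf]
    by (auto split: bool.split)
qed

lemma indep_var_iff_covariance_eq_0:
  fixes X Y :: "'w \<Rightarrow> real"
  assumes fin: "finite (set_pmf p)"
    and X01: "\<And>w. X w \<in> {0, 1}" and Y01: "\<And>w. Y w \<in> {0, 1}"
  shows "prob_space.indep_var (measure_pmf p) (count_space UNIV) X (count_space UNIV) Y
    \<longleftrightarrow> covariance (measure_pmf p) X Y = 0"
proof
  assume "prob_space.indep_var (measure_pmf p) (count_space UNIV) X (count_space UNIV) Y"
  then have "prob_space.indep_var (measure_pmf p) borel X borel Y"
    using prob_space.indep_var_compose[OF prob_space_measure_pmf, of _ _ X _ Y id borel id borel]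
    by simp
  then show "covariance (measure_pmf p) X Y = 0"
    unfolding covariance_measure_pmf_finite[OF fin]
    by (simp add: prob_space.indep_var_lebesgue_integral[OF prob_space_measure_pmf] integrable_measure_pmf_finite[OF fin])
next
  assume cov: "covariance (measure_pmf p) X Y = 0"
  show "prob_space.indep_var (measure_pmf p) (count_space UNIV) X (count_space UNIV) Y"
  proof (rule indep_var_measure_pmfI)
    fix A B :: "real set"
    have lin: "indicator (Z -` S) w = indicator S 0 + (indicator S 1 - indicator S 0) * Z w"
      if "\<And>w. Z w \<in> {0, 1}" for S and Z :: "'w \<Rightarrow> real" and w
      using that[of w] by (auto simp: indicator_def)
    define a where "a = (indicator A (0::real) :: real)"
    define \<alpha> where "\<alpha> = indicator A (1::real) - a"
    define b where "b = (indicator B (0::real) :: real)"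
    define \<beta> where "\<beta> = indicator B (1::real) - b"
    define mX mY where "mX = measure_pmf.expectation p X" and "mY = measure_pmf.expectation p Y"
    have int: "integrable (measure_pmf p) f" for f :: "'w \<Rightarrow> real"
      using integrable_measure_pmf_finite[OF fin] .
    have linX: "indicator (X -` A) w = a + \<alpha> * X w" for w
      using lin[OF X01] by (simp add: a_def \<alpha>_def)
    have linY: "indicator (Y -` B) w = b + \<beta> * Y w" for w
      using lin[OF Y01] by (simp add: b_def \<beta>_def)
    have prob: "measure (measure_pmf p) S = measure_pmf.expectation p (indicator S)" for S
      by simp
    have "(\<lambda>w. indicator (X -` A \<inter> Y -` B) w) =
      (\<lambda>w. a * b + a * \<beta> * Y w + \<alpha> * b * X w + \<alpha> * \<beta> * (X w * Y w))"
      unfolding indicator_inter_arith linX linY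
      by (simp add: fun_eq_iff algebra_simps)
    then have "measure (measure_pmf p) (X -` A \<inter> Y -` B) = a * b + a * \<beta> * mY + \<alpha> * b * mX + \<alpha> * \<beta> * (mX * mY)"
      using cov unfolding prob covariance_measure_pmf_finite[OF fin]
      by (simp add: int mX_def mY_def prob_space_measure_pmf prob_space.prob_space)
    moreover have "measure (measure_pmf p) (X -` A) = a + \<alpha> * mX"
      unfolding prob linX
      by (simp add: int mX_def prob_space_measure_pmf prob_space.prob_space)
    moreover have "measure (measure_pmf p) (Y -` B) = b + \<beta> * mY"
      unfolding prob linY
      by (simp add: int mY_def prob_space_measure_pmf prob_space.prob_space)
    ultimately show "measure (measure_pmf p) (X -` A \<inter> Y -` B) =
      measure (measure_pmf p) (X -` A) * measure (measure_pmf p) (Y -` B)"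
      by (simp add: algebra_simps)
  qed
qed

section \<open>The rank-two subsystem spanned by two roots\<close>

text \<open>A pair p stands for the vector fst p b + snd p c (see coeff_vec below); on such pairs
  s_b and s_c act through the Cartan integers A = cartan c b and B = cartan b c.\<close>

definition refl_fst_coeff :: "real \<Rightarrow> real \<times> real \<Rightarrow> real \<times> real" where
  "refl_fst_coeff A p = (- fst p - A * snd p, snd p)"

definition refl_snd_coeff :: "real \<Rightarrow> real \<times> real \<Rightarrow> real \<times> real" where
  "refl_snd_coeff B p = (fst p, - snd p - B * fst p)"

definition rot_coeff :: "real \<Rightarrow> real \<Rightarrow> real \<times> real \<Rightarrow> real \<times> real" where
  "rot_coeff A B = refl_fst_coeff A \<circ> refl_snd_coeff B"

definition lin_form :: "real \<Rightarrow> real \<Rightarrow> real \<times> real \<Rightarrow> real" where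
  "lin_form \<beta> \<gamma> p = fst p * \<beta> + snd p * \<gamma>"

definition both_negative :: "real \<Rightarrow> real \<Rightarrow> (real \<times> real \<Rightarrow> real \<times> real) \<Rightarrow> bool" where
  "both_negative \<beta> \<gamma> d \<longleftrightarrow> lin_form \<beta> \<gamma> (d (1, 0)) < 0 \<and> lin_form \<beta> \<gamma> (d (0, 1)) < 0"

text \<open>The elements of the dihedral group generated by s_b and s_c are (s_b s_c)^k and
  (s_b s_c)^k s_b for k < m; beta and gamma are the values of a linear functional on b and c.\<close>

definition neg_pair_count :: "real \<Rightarrow> real \<Rightarrow> nat \<Rightarrow> real \<Rightarrow> real \<Rightarrow> nat" where
  "neg_pair_count A B m \<beta> \<gamma> = (\<Sum>k<m.
     of_bool (both_negative \<beta> \<gamma> (rot_coeff A B ^^ k)) +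
     of_bool (both_negative \<beta> \<gamma> (rot_coeff A B ^^ k \<circ> refl_fst_coeff A)))"

definition cartan_pairs :: "(real \<times> real) set" where
  "cartan_pairs = {(0, 0), (1, 1), (1, 2), (2, 1), (1, 3), (3, 1),
                   (-1, -1), (-1, -2), (-2, -1), (-1, -3), (-3, -1)}"

text \<open>The order m of s_b s_c, determined by A B = 4 cos^2 (pi / m).\<close>

definition dihedral_order :: "real \<Rightarrow> nat" where
  "dihedral_order n = (if n = 0 then 2 else if n = 1 then 3 else if n = 2 then 4 else 6)"

lemma rot_coeff_Pair: "rot_coeff A B (x, y) = (- x - A * (- y - B * x), - y - B * x)"
  by (simp add: rot_coeff_def refl_fst_coeff_def refl_snd_coeff_def)

lemma funpow_dihedral_order_rot_coeff:
  assumes "(A, B) \<in> cartan_pairs"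
  shows "(rot_coeff A B ^^ dihedral_order (A * B)) p = p"
  using assms
  by (cases p) (auto simp: cartan_pairs_def dihedral_order_def numeral_eq_Suc rot_coeff_Pair algebra_simps)

lemma funpow_rot_coeff_neq:
  assumes "(A, B) \<in> cartan_pairs" and "0 < k" and "k < dihedral_order (A * B)"
  shows "(rot_coeff A B ^^ k) (1, 0) \<noteq> (1, 0)"
proof -
  have "\<forall>k < dihedral_order (A * B). 0 < k \<longrightarrow> (rot_coeff A B ^^ k) (1, 0) \<noteq> (1, 0)"
    using assms(1) by (auto simp: cartan_pairs_def dihedral_order_def numeral_eq_Suc rot_coeff_Pair All_less_Suc)
  then show ?thesis
    using assms(2,3) by blast
qed

lemma neg_pair_count_cartan_pairs:
  assumes "(A, B) \<in> cartan_pairs"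
    and "\<forall>k < dihedral_order (A * B). \<forall>d \<in> {rot_coeff A B ^^ k, rot_coeff A B ^^ k \<circ> refl_fst_coeff A}.
           lin_form \<beta> \<gamma> (d (1, 0)) \<noteq> 0 \<and> lin_form \<beta> \<gamma> (d (0, 1)) \<noteq> 0"
  shows "neg_pair_count A B (dihedral_order (A * B)) \<beta> \<gamma> = (if 0 \<le> A then dihedral_order (A * B) - 1 else 1)"
  using assms unfolding cartan_pairs_def neg_pair_count_def
  by (simp only: insert_iff empty_iff prod.inject) (elim disjE conjE;
      simp add: dihedral_order_def numeral_eq_Suc rot_coeff_Pair All_less_Suc lessThan_Suc
        refl_fst_coeff_def both_negative_def lin_form_def algebra_simps; smt (verit))

definition coeff_vec :: "'a::real_vector \<Rightarrow> 'a \<Rightarrow> real \<times> real \<Rightarrow> 'a" where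
  "coeff_vec b c p = fst p *\<^sub>R b + snd p *\<^sub>R c"

lemma coeff_vec_inner: "coeff_vec b c p \<bullet> y = lin_form (b \<bullet> y) (c \<bullet> y) p"
  by (simp add: coeff_vec_def lin_form_def inner_add_left)

lemma refl_coeff_vec_fst:
  assumes "b \<noteq> 0" "z \<bullet> b = 0"
  shows "refl b (z + coeff_vec b c p) = z + coeff_vec b c (refl_fst_coeff (cartan c b) p)"
proof -
  have "cartan (z + coeff_vec b c p) b = 2 * fst p + snd p * cartan c b"
    using assms by (simp add: coeff_vec_def cartan_def inner_add_left field_simps)
  then show ?thesis
    by (simp add: refl_eq_cartan coeff_vec_def refl_fst_coeff_def algebra_simps flip: scaleR_2)
qed

lemma refl_coeff_vec_snd:
  assumes "c \<noteq> 0" "z \<bullet> c = 0"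
  shows "refl c (z + coeff_vec b c p) = z + coeff_vec b c (refl_snd_coeff (cartan b c) p)"
proof -
  have "cartan (z + coeff_vec b c p) c = 2 * snd p + fst p * cartan b c"
    using assms by (simp add: coeff_vec_def cartan_def inner_add_left field_simps)
  then show ?thesis
    by (simp add: refl_eq_cartan coeff_vec_def refl_snd_coeff_def algebra_simps flip: scaleR_2)
qed

lemma funpow_refl_comp_coeff_vec:
  assumes "b \<noteq> 0" "c \<noteq> 0" "z \<bullet> b = 0" "z \<bullet> c = 0"
  shows "((refl b \<circ> refl c) ^^ k) (z + coeff_vec b c p) =
    z + coeff_vec b c ((rot_coeff (cartan c b) (cartan b c) ^^ k) p)"
  by (induction k) (simp_all add: assms refl_coeff_vec_fst refl_coeff_vec_snd rot_coeff_def)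

lemma orthogonal_coeff_vec_decomp:
  fixes b c x :: "'a::euclidean_space"
  shows "\<exists>z p. z \<bullet> b = 0 \<and> z \<bullet> c = 0 \<and> x = z + coeff_vec b c p"
proof -
  obtain y z where y: "y \<in> span {b, c}" and z: "\<And>u. u \<in> span {b, c} \<Longrightarrow> orthogonal z u"
    and "x = y + z"
    using orthogonal_subspace_decomp_exists[of "{b, c}" x] by metis
  obtain s t where "y = s *\<^sub>R b + t *\<^sub>R c"
    using y by (auto simp: span_insert span_singleton algebra_simps)
  then have "x = z + coeff_vec b c (s, t)"
    using \<open>x = y + z\<close> by (simp add: coeff_vec_def)
  moreover have "z \<bullet> b = 0" "z \<bullet> c = 0"
    using z[of b] z[of c] by (simp_all add: span_base orthogonal_def)
  ultimately show ?thesis by blast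
qed

lemma coeff_vec_inj:
  assumes "b \<noteq> 0" "\<And>t. c \<noteq> t *\<^sub>R b" "coeff_vec b c p = coeff_vec b c q"
  shows "p = q"
proof (cases "snd p = snd q")
  case True
  then show ?thesis
    using assms(1,3) by (simp add: coeff_vec_def prod_eq_iff)
next
  case False
  have "(snd q - snd p) *\<^sub>R c = (fst p - fst q) *\<^sub>R b"
    using assms(3) by (simp add: coeff_vec_def algebra_simps)
  then have "c = inverse (snd q - snd p) *\<^sub>R ((fst p - fst q) *\<^sub>R b)"
    using False by (metis scaleR_scaleR left_inverse right_minus_eq scaleR_one)
  then have "c = ((fst p - fst q) / (snd q - snd p)) *\<^sub>R b"
    by (simp add: divide_inverse_commute)
  then show ?thesis
    using assms(2) by blast
qed

lemma Cauchy_Schwarz_ineq_strict: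
  fixes a b :: "'a::real_inner"
  assumes "a \<noteq> 0" and "\<And>t. b \<noteq> t *\<^sub>R a"
  shows "(a \<bullet> b)\<^sup>2 < (a \<bullet> a) * (b \<bullet> b)"
proof -
  define r where "r = (a \<bullet> b) / (a \<bullet> a)"
  have "0 < (b - r *\<^sub>R a) \<bullet> (b - r *\<^sub>R a)"
    using assms(2)[of r] by simp
  also have "\<dots> = b \<bullet> b - (a \<bullet> b)\<^sup>2 / (a \<bullet> a)"
    using assms(1) by (simp add: r_def inner_diff_left inner_diff_right inner_commute power2_eq_square field_simps)
  finally show ?thesis
    using assms(1) by (simp add: field_simps)
qed

lemma int_pair_mem_cartan_pairs:
  fixes i j :: int
  assumes "i * j < 4" and "sgn i = sgn j"
  shows "(of_int i, of_int j) \<in> cartan_pairs"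
proof -
  have "i = 0 \<longleftrightarrow> j = 0"
    using assms(2) by (metis sgn_0_0)
  moreover have "\<bar>i * j\<bar> < 4"
    using assms by (auto simp: sgn_if abs_mult split: if_splits)
  ultimately have "\<bar>i\<bar> \<le> 3 \<and> \<bar>j\<bar> \<le> 3"
  proof (cases "i = 0")
    case False
    with \<open>i = 0 \<longleftrightarrow> j = 0\<close> have "\<bar>i\<bar> \<le> \<bar>i\<bar> * \<bar>j\<bar>" "\<bar>j\<bar> \<le> \<bar>i\<bar> * \<bar>j\<bar>"
      by (simp_all add: mult_le_cancel_left1 mult_le_cancel_right1)
    with \<open>\<bar>i * j\<bar> < 4\<close> show ?thesis
      by (simp add: abs_mult)
  qed simp
  then have "i \<in> {-3, -2, -1, 0, 1, 2, 3}" "j \<in> {-3, -2, -1, 0, 1, 2, 3}"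
    by auto
  then show ?thesis
    using assms unfolding cartan_pairs_def by (elim insertE emptyE; simp)
qed

lemma cartan_pairs_memI:
  fixes a b :: "'a::euclidean_space"
  assumes "a \<noteq> 0" and "\<And>t. b \<noteq> t *\<^sub>R a" and "cartan b a \<in> \<int>" and "cartan a b \<in> \<int>"
  shows "(cartan b a, cartan a b) \<in> cartan_pairs"
proof -
  obtain i j where ij: "cartan b a = of_int i" "cartan a b = of_int j"
    using assms(3,4) Ints_cases by metis
  have "b \<noteq> 0"
    using assms(2)[of 0] by simp
  have "cartan b a * cartan a b = 4 * (a \<bullet> b)\<^sup>2 / ((a \<bullet> a) * (b \<bullet> b))"
    by (simp add: cartan_def inner_commute power2_eq_square)
  also have "\<dots> < 4"
    using Cauchy_Schwarz_ineq_strict[OF assms(1,2)] assms(1) \<open>b \<noteq> 0\<close> by (simp add: field_simps)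
  finally have "i * j < 4"
    using ij by (metis of_int_less_iff of_int_mult of_int_numeral)
  have "sgn (cartan b a) = sgn (a \<bullet> b)" "sgn (cartan a b) = sgn (a \<bullet> b)"
    using assms(1) \<open>b \<noteq> 0\<close> by (simp_all add: cartan_def sgn_mult sgn_divide inner_commute)
  moreover have "sgn (real_of_int k) = of_int (sgn k)" for k
    by (simp add: sgn_if)
  ultimately have "sgn i = sgn j"
    using ij by (metis of_int_eq_iff)
  then show ?thesis
    using int_pair_mem_cartan_pairs \<open>i * j < 4\<close> ij by metis
qed

section \<open>The random variables X_b on the Weyl group\<close>

locale regular_positive_system =
  fixes R P :: "'a::euclidean_space set" and v :: 'a
  assumes root_system: "root_system R"
    and regular: "\<And>a. a \<in> R \<Longrightarrow> a \<bullet> v \<noteq> 0"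
    and positive_roots: "P = {a \<in> R. 0 < a \<bullet> v}"
begin

abbreviation W :: "('a \<Rightarrow> 'a) set" where
  "W \<equiv> weyl_group R"

lemma X_rv_weyl_group: "w \<in> W \<Longrightarrow> x \<in> R \<Longrightarrow> X_rv P x w = of_bool (w x \<bullet> v < 0)"
  using weyl_group_root[OF root_system] uminus_root[OF root_system] regular
  by (auto simp: X_rv_def positive_roots image_iff) (metis minus_minus inner_minus_left neg_0_less_iff_less)

lemma X_rv_comp_refl:
  assumes "w \<in> W" "x \<in> R"
  shows "X_rv P x (w \<circ> refl x) = 1 - X_rv P x w"
proof -
  have "(w \<circ> refl x) x = - w x"
    using refl_self[OF root_nonzero[OF root_system assms(2)]] linear_neg[OF linear_weyl_group[OF root_system]] assms
    by simp
  then show ?thesis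
    using assms regular[OF weyl_group_root[OF root_system assms]]
      X_rv_weyl_group weyl_group_comp[OF root_system] refl_weyl_group[OF root_system]
    by auto
qed

lemma sum_X_rv:
  assumes "x \<in> R"
  shows "(\<Sum>w\<in>W. X_rv P x w) = card W / 2"
proof -
  have "(\<Sum>w\<in>W. X_rv P x w) = (\<Sum>w\<in>W. 1 - X_rv P x w)"
    using sum_weyl_group_comp_right[OF root_system refl_weyl_group[OF root_system assms], of "X_rv P x"]
    by (simp add: X_rv_comp_refl assms)
  then show ?thesis
    by (simp add: sum_subtractf)
qed

lemma weyl_group_nonempty: "W \<noteq> {}"
  using weyl_group.weyl_id by blast

lemma finite_set_pmf_unif_W: "finite (set_pmf (pmf_of_set W))"
  by (simp add: weyl_group_nonempty finite_weyl_group[OF root_system])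

lemma integral_unif_W: "(\<integral>w. f w \<partial>unif_W R) = (\<Sum>w\<in>W. f w) / card W"
  unfolding unif_W_def by (rule integral_pmf_of_set[OF weyl_group_nonempty finite_weyl_group[OF root_system]])

lemma covariance_X_rv:
  assumes "x \<in> R" "y \<in> R"
  shows "covariance (unif_W R) (X_rv P x) (X_rv P y) = (\<Sum>w\<in>W. X_rv P x w * X_rv P y w) / card W - 1 / 4"
proof -
  have "card W > 0"
    using finite_weyl_group[OF root_system] weyl_group_nonempty card_gt_0_iff by blast
  then show ?thesis
    using covariance_measure_pmf_finite[OF finite_set_pmf_unif_W]
    by (simp add: unif_W_def[symmetric] integral_unif_W sum_X_rv assms)
qed

lemma indep_var_X_rv_iff:
  "prob_space.indep_var (unif_W R) (count_space UNIV) (X_rv P x) (count_space UNIV) (X_rv P y)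
    \<longleftrightarrow> covariance (unif_W R) (X_rv P x) (X_rv P y) = 0"
  unfolding unif_W_def
  by (rule indep_var_iff_covariance_eq_0[OF finite_set_pmf_unif_W]) (simp_all add: X_rv_def)

lemma X_rv_comp_weyl_group:
  assumes "w \<in> W" "d \<in> W" "x \<in> R"
  shows "X_rv P x (w \<circ> d) = of_bool (d x \<bullet> inv w v < 0)" and "d x \<bullet> inv w v \<noteq> 0"
proof -
  have "(w \<circ> d) x \<bullet> v = w (d x) \<bullet> w (inv w v)"
    using weyl_group_comp_inv[OF root_system assms(1)] by (simp add: fun_eq_iff)
  also have "\<dots> = d x \<bullet> inv w v"
    using weyl_group_inner[OF root_system assms(1)] .
  finally have "(w \<circ> d) x \<bullet> v = d x \<bullet> inv w v" .
  moreover have "w \<circ> d \<in> W"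
    using weyl_group_comp[OF root_system assms(1,2)] .
  ultimately show "X_rv P x (w \<circ> d) = of_bool (d x \<bullet> inv w v < 0)" "d x \<bullet> inv w v \<noteq> 0"
    using X_rv_weyl_group regular weyl_group_root[OF root_system] assms(3) by metis+
qed

context
  fixes b c :: 'a
  assumes b: "b \<in> R" and c: "c \<in> R" and c_neq_b: "c \<noteq> b" and c_neq_neg_b: "c \<noteq> - b"
begin

lemma not_parallel: "c \<noteq> t *\<^sub>R b"
  using root_scaleR[OF root_system b, of t] c c_neq_b c_neq_neg_b by auto

lemma cartan_pair: "(cartan c b, cartan b c) \<in> cartan_pairs"
  using cartan_pairs_memI[OF root_nonzero[OF root_system b] not_parallel]
    cartan_root_Ints[OF root_system] b c by blast

lemma dihedral_coeff_vec:
  "((refl b \<circ> refl c) ^^ k) (coeff_vec b c p) = coeff_vec b c ((rot_coeff (cartan c b) (cartan b c) ^^ k) p)"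
  "((refl b \<circ> refl c) ^^ k \<circ> refl b) (coeff_vec b c p) =
    coeff_vec b c ((rot_coeff (cartan c b) (cartan b c) ^^ k \<circ> refl_fst_coeff (cartan c b)) p)"
  using funpow_refl_comp_coeff_vec[of b c 0] refl_coeff_vec_fst[of b 0]
    root_nonzero[OF root_system b] root_nonzero[OF root_system c] by simp_all

lemma ord_refl_eq_dihedral_order: "ord_refl b c = dihedral_order (cartan c b * cartan b c)"
  unfolding ord_refl_def
proof (rule Least_equality)
  let ?m = "dihedral_order (cartan c b * cartan b c)"
  have "((refl b \<circ> refl c) ^^ ?m) x = x" for x
  proof -
    obtain z p where "z \<bullet> b = 0" "z \<bullet> c = 0" "x = z + coeff_vec b c p"
      using orthogonal_coeff_vec_decomp by blast
    then show ?thesis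
      using funpow_refl_comp_coeff_vec[OF root_nonzero[OF root_system b] root_nonzero[OF root_system c]]
        funpow_dihedral_order_rot_coeff[OF cartan_pair] by simp
  qed
  then show "0 < ?m \<and> (refl b \<circ> refl c) ^^ ?m = id"
    by (auto simp: dihedral_order_def)
next
  fix k assume k: "0 < k \<and> (refl b \<circ> refl c) ^^ k = id"
  show "dihedral_order (cartan c b * cartan b c) \<le> k"
  proof (rule ccontr)
    assume "\<not> dihedral_order (cartan c b * cartan b c) \<le> k"
    moreover have "coeff_vec b c ((rot_coeff (cartan c b) (cartan b c) ^^ k) (1, 0)) = coeff_vec b c (1, 0)"
      using dihedral_coeff_vec(1)[of k "(1, 0)"] k by simp
    ultimately show False
      using coeff_vec_inj[OF root_nonzero[OF root_system b] not_parallel] funpow_rot_coeff_neq[OF cartan_pair] k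
      by (meson not_le)
  qed
qed

lemma ord_refl_pos: "0 < ord_refl b c"
  by (simp add: ord_refl_eq_dihedral_order dihedral_order_def)

lemma ord_refl_eq_2_iff: "ord_refl b c = 2 \<longleftrightarrow> b \<bullet> c = 0"
  using root_nonzero[OF root_system b] root_nonzero[OF root_system c]
  by (simp add: ord_refl_eq_dihedral_order dihedral_order_def cartan_def inner_commute)

lemma funpow_refl_comp_weyl_group: "(refl b \<circ> refl c) ^^ k \<in> W"
  and funpow_refl_comp_refl_weyl_group: "(refl b \<circ> refl c) ^^ k \<circ> refl b \<in> W"
  using funpow_weyl_group weyl_group_comp refl_weyl_group b c root_system by metis+

lemma X_rv_mult_comp:
  assumes "w \<in> W" "d \<in> W" and coeff: "\<And>p. d (coeff_vec b c p) = coeff_vec b c (d' p)"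
  shows "X_rv P b (w \<circ> d) * X_rv P c (w \<circ> d) = of_bool (both_negative (b \<bullet> inv w v) (c \<bullet> inv w v) d')"
    and "lin_form (b \<bullet> inv w v) (c \<bullet> inv w v) (d' (1, 0)) \<noteq> 0 \<and> lin_form (b \<bullet> inv w v) (c \<bullet> inv w v) (d' (0, 1)) \<noteq> 0"
proof -
  have "d b = coeff_vec b c (d' (1, 0))" "d c = coeff_vec b c (d' (0, 1))"
    using coeff[of "(1, 0)"] coeff[of "(0, 1)"] by (simp_all add: coeff_vec_def)
  then have "d b \<bullet> inv w v = lin_form (b \<bullet> inv w v) (c \<bullet> inv w v) (d' (1, 0))"
    "d c \<bullet> inv w v = lin_form (b \<bullet> inv w v) (c \<bullet> inv w v) (d' (0, 1))"
    by (simp_all add: coeff_vec_inner)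
  then show "X_rv P b (w \<circ> d) * X_rv P c (w \<circ> d) = of_bool (both_negative (b \<bullet> inv w v) (c \<bullet> inv w v) d')"
    "lin_form (b \<bullet> inv w v) (c \<bullet> inv w v) (d' (1, 0)) \<noteq> 0 \<and> lin_form (b \<bullet> inv w v) (c \<bullet> inv w v) (d' (0, 1)) \<noteq> 0"
    using X_rv_comp_weyl_group[OF assms(1,2) b] X_rv_comp_weyl_group[OF assms(1,2) c]
    by (simp_all add: both_negative_def)
qed

lemma sum_dihedral_coset:
  assumes w: "w \<in> W"
  shows "(\<Sum>k<ord_refl b c.
      X_rv P b (w \<circ> (refl b \<circ> refl c) ^^ k) * X_rv P c (w \<circ> (refl b \<circ> refl c) ^^ k)
    + X_rv P b (w \<circ> ((refl b \<circ> refl c) ^^ k \<circ> refl b)) * X_rv P c (w \<circ> ((refl b \<circ> refl c) ^^ k \<circ> refl b)))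
    = (if 0 \<le> b \<bullet> c then real (ord_refl b c) - 1 else 1)"
proof -
  define A B where "A = cartan c b" and "B = cartan b c"
  define \<beta> \<gamma> where "\<beta> = b \<bullet> inv w v" and "\<gamma> = c \<bullet> inv w v"
  note X_rot = X_rv_mult_comp[OF w funpow_refl_comp_weyl_group dihedral_coeff_vec(1),
      folded A_def B_def \<beta>_def \<gamma>_def]
  note X_rot_refl = X_rv_mult_comp[OF w funpow_refl_comp_refl_weyl_group dihedral_coeff_vec(2),
      folded A_def B_def \<beta>_def \<gamma>_def]
  have "(\<Sum>k<ord_refl b c.
      X_rv P b (w \<circ> (refl b \<circ> refl c) ^^ k) * X_rv P c (w \<circ> (refl b \<circ> refl c) ^^ k)
    + X_rv P b (w \<circ> ((refl b \<circ> refl c) ^^ k \<circ> refl b)) * X_rv P c (w \<circ> ((refl b \<circ> refl c) ^^ k \<circ> refl b)))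
    = real (neg_pair_count A B (dihedral_order (A * B)) \<beta> \<gamma>)"
    unfolding neg_pair_count_def X_rot(1) X_rot_refl(1) ord_refl_eq_dihedral_order A_def B_def
      of_nat_sum of_nat_add of_nat_of_bool ..
  also have "\<dots> = (if 0 \<le> A then real (dihedral_order (A * B)) - 1 else 1)"
    using neg_pair_count_cartan_pairs[OF cartan_pair[folded A_def B_def], of \<beta> \<gamma>] X_rot(2) X_rot_refl(2)
    by (simp add: dihedral_order_def)
  also have "0 \<le> A \<longleftrightarrow> 0 \<le> b \<bullet> c"
    using root_nonzero[OF root_system b] by (simp add: A_def cartan_def inner_commute zero_le_divide_iff)
      (meson inner_gt_zero_iff not_le)
  finally show ?thesis
    by (simp only: ord_refl_eq_dihedral_order A_def B_def)
qed

lemma sum_X_rv_mult: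
  "(\<Sum>w\<in>W. X_rv P b w * X_rv P c w)
    = card W * (if 0 \<le> b \<bullet> c then real (ord_refl b c) - 1 else 1) / (2 * ord_refl b c)"
proof -
  let ?F = "\<lambda>w. X_rv P b w * X_rv P c w" and ?T = "refl b \<circ> refl c" and ?m = "ord_refl b c"
  have "card W * (if 0 \<le> b \<bullet> c then real ?m - 1 else 1) = (\<Sum>w\<in>W. \<Sum>k<?m. ?F (w \<circ> ?T ^^ k) + ?F (w \<circ> (?T ^^ k \<circ> refl b)))"
    by (simp add: sum_dihedral_coset)
  also have "\<dots> = (\<Sum>k<?m. (\<Sum>w\<in>W. ?F (w \<circ> ?T ^^ k)) + (\<Sum>w\<in>W. ?F (w \<circ> (?T ^^ k \<circ> refl b))))"
    by (simp add: sum.swap[of _ W] sum.distrib)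
  also have "\<dots> = 2 * ?m * (\<Sum>w\<in>W. ?F w)"
    by (simp add: sum_weyl_group_comp_right[OF root_system funpow_refl_comp_weyl_group, where f = ?F]
        sum_weyl_group_comp_right[OF root_system funpow_refl_comp_refl_weyl_group, where f = ?F])
  finally show ?thesis
    using ord_refl_pos by (simp add: field_simps)
qed

end

end

theorem theorem3p1:
  fixes R P :: "'a::euclidean_space set" and b c :: 'a
  assumes "root_system R"
    and "positive_system R P"
    and "b \<in> P" and "c \<in> P" and "b \<noteq> c"
  shows "(b \<bullet> c \<ge> 0 \<longrightarrow>
            covariance (unif_W R) (X_rv P b) (X_rv P c) = 1/4 - 1 / (2 * real (ord_refl b c)))
       \<and> (b \<bullet> c \<le> 0 \<longrightarrow>
            covariance (unif_W R) (X_rv P b) (X_rv P c) = - (1/4 - 1 / (2 * real (ord_refl b c))))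
       \<and> (prob_space.indep_var (unif_W R) (count_space UNIV) (X_rv P b)
                                          (count_space UNIV) (X_rv P c)
            \<longleftrightarrow> b \<bullet> c = 0)"
proof -
  obtain v where "\<forall>a\<in>R. a \<bullet> v \<noteq> 0" and P: "P = {a \<in> R. 0 < a \<bullet> v}"
    using assms(2) unfolding positive_system_def by blast
  then interpret regular_positive_system R P v
    using assms(1) by unfold_locales blast+
  have b: "b \<in> R" and c: "c \<in> R" and "c \<noteq> - b"
    using assms(3,4) P by auto
  define m where "m = ord_refl b c"
  have "0 < card W"
    using finite_weyl_group[OF assms(1)] weyl_group_nonempty by (simp add: card_gt_0_iff)
  then have cov: "covariance (unif_W R) (X_rv P b) (X_rv P c) = (if 0 \<le> b \<bullet> c then real m - 1 else 1) / (2 * m) - 1 / 4"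
    using covariance_X_rv[OF b c] sum_X_rv_mult[OF b c assms(5)[symmetric] \<open>c \<noteq> - b\<close>] by (simp add: m_def)
  have "0 < m" and "m = 2 \<longleftrightarrow> b \<bullet> c = 0"
    using ord_refl_pos ord_refl_eq_2_iff b c assms(5) \<open>c \<noteq> - b\<close> by (auto simp: m_def)
  then show ?thesis
    unfolding indep_var_X_rv_iff cov m_def[symmetric] by (auto simp: field_simps)
qed

end
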